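(* Let $k$ be a nonnegative integer and let $i,j\geq k+2$ be integers. Then $$R_k^{\mathcal{CO}}(i,j)=1+\frac{(i-1)(j-1)-\{i-1\}\{j-1\}}{k+1},$$ where $\{x\}\in\{0,1,\dots,k\}$ denotes the residue of the integer $x$ modulo $k+1$ and $\mathcal{CO}$ is the class of cographs.
   Context: All graphs are finite and simple. For a graph $G$ and a nonnegative integer $k$, a $k$-sparse $j$-set is a set of $j$ vertices of $G$ inducing a subgraph of maximum degree at most $k$; a $k$-dense $i$-set is a set of $i$ vertices of $G$ that is $k$-sparse in the complement of $G$. For a graph class $\mathcal{G}$, $R_k^{\mathcal{G}}(i,j)$ is the smallest natural number $n$ such that every graph on $n$ vertices in $\mathcal{G}$ has either a $k$-dense $i$-set or a $k$-sparse $j$-set. A cograph is a graph containing no induced path on four vertices (equivalently, the complement of every connected induced subgraph on at least two vertices is disconnected). *)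

theory Defs
  imports Main
begin

text \<open>A finite simple graph on vertex set V is given by a symmetric, irreflexive
edge relation E (only its restriction to V matters).\<close>
definition simple_graph :: "'a set \<Rightarrow> ('a \<Rightarrow> 'a \<Rightarrow> bool) \<Rightarrow> bool" where
  "simple_graph V E \<longleftrightarrow> finite V \<and> (\<forall>u\<in>V. \<forall>v\<in>V. E u v \<longrightarrow> E v u) \<and> (\<forall>v\<in>V. \<not> E v v)"

definition compl_graph :: "('a \<Rightarrow> 'a \<Rightarrow> bool) \<Rightarrow> 'a \<Rightarrow> 'a \<Rightarrow> bool" where
  "compl_graph E u v \<longleftrightarrow> u \<noteq> v \<and> \<not> E u v"

definition k_sparse :: "nat \<Rightarrow> ('a \<Rightarrow> 'a \<Rightarrow> bool) \<Rightarrow> 'a set \<Rightarrow> bool" where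
  "k_sparse k E S \<longleftrightarrow> (\<forall>v\<in>S. card {u\<in>S. E v u} \<le> k)"

definition k_dense :: "nat \<Rightarrow> ('a \<Rightarrow> 'a \<Rightarrow> bool) \<Rightarrow> 'a set \<Rightarrow> bool" where
  "k_dense k E S \<longleftrightarrow> k_sparse k (compl_graph E) S"

definition cograph :: "'a set \<Rightarrow> ('a \<Rightarrow> 'a \<Rightarrow> bool) \<Rightarrow> bool" where
  "cograph V E \<longleftrightarrow> simple_graph V E \<and>
     \<not> (\<exists>a\<in>V. \<exists>b\<in>V. \<exists>c\<in>V. \<exists>d\<in>V. distinct [a,b,c,d] \<and>
          E a b \<and> E b c \<and> E c d \<and> \<not> E a c \<and> \<not> E b d \<and> \<not> E a d)"

text \<open>Ramsey number for cographs. Every graph on n vertices is isomorphic to one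
on the vertex set {0..<n}, so it suffices to quantify over those.\<close>
definition ramsey_CO :: "nat \<Rightarrow> nat \<Rightarrow> nat \<Rightarrow> nat" where
  "ramsey_CO k i j = (LEAST n. \<forall>E :: nat \<Rightarrow> nat \<Rightarrow> bool. cograph {0..<n} E \<longrightarrow>
      (\<exists>S\<subseteq>{0..<n}. card S = i \<and> k_dense k E S) \<or>
      (\<exists>S\<subseteq>{0..<n}. card S = j \<and> k_sparse k E S))"

end

theory Submission
  imports Defs
begin

text \<open>Write m = k + 1 and f(x, y) = co_bound m x y = (x div m) y + (x mod m) (y div m),
  which equals (x y - (x mod m) (y mod m)) div m. Every cograph with no k-dense (x+1)-set and no k-sparse
  (y+1)-set, where x, y \<ge> m, has at most f(x, y) vertices: by Seinsche's theorem the graph or its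
  complement is disconnected, complementation swaps x and y and f is symmetric, and if V splits
  into parts A and B without edges between them, maximum k-sparse sets of A and B of sizes
  y1 and y2 combine to one of V, so by induction
  |V| \<le> f(x, y1) + f(x, y2) \<le> f(x, y1 + y2) \<le> f(x, y).
  An explicit cograph attains f(x, y), so R(i, j) = f(i - 1, j - 1) + 1.\<close>

lemma simple_graph_subset: "simple_graph V E \<Longrightarrow> W \<subseteq> V \<Longrightarrow> simple_graph W E"
  unfolding simple_graph_def by (auto intro: finite_subset)

lemma cograph_subset: "cograph V E \<Longrightarrow> W \<subseteq> V \<Longrightarrow> cograph W E"
  unfolding cograph_def using simple_graph_subset by blast

lemma simple_graph_compl: "simple_graph V E \<Longrightarrow> simple_graph V (compl_graph E)"
  unfolding simple_graph_def compl_graph_def by auto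

lemma compl_compl_graph:
  "simple_graph V E \<Longrightarrow> u \<in> V \<Longrightarrow> v \<in> V \<Longrightarrow> compl_graph (compl_graph E) u v = E u v"
  unfolding simple_graph_def compl_graph_def by auto

lemma cograph_compl:
  assumes "cograph V E"
  shows "cograph V (compl_graph E)"
  unfolding cograph_def
proof (intro conjI notI)
  have sg: "simple_graph V E" using assms by (simp add: cograph_def)
  then show "simple_graph V (compl_graph E)" by (rule simple_graph_compl)
  assume "\<exists>a\<in>V. \<exists>b\<in>V. \<exists>c\<in>V. \<exists>d\<in>V. distinct [a, b, c, d] \<and>
    compl_graph E a b \<and> compl_graph E b c \<and> compl_graph E c d \<and>
    \<not> compl_graph E a c \<and> \<not> compl_graph E b d \<and> \<not> compl_graph E a d"
  then obtain a b c d where "a \<in> V" "b \<in> V" "c \<in> V" "d \<in> V" "distinct [a, b, c, d]"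
    "compl_graph E a b" "compl_graph E b c" "compl_graph E c d"
    "\<not> compl_graph E a c" "\<not> compl_graph E b d" "\<not> compl_graph E a d"
    by blast
  \<comment> \<open>the complement of the induced path a-b-c-d is the induced path c-a-d-b\<close>
  with sg have "distinct [c, a, d, b] \<and> E c a \<and> E a d \<and> E d b \<and> \<not> E c d \<and> \<not> E a b \<and> \<not> E c b"
    unfolding simple_graph_def compl_graph_def by auto
  with assms \<open>a \<in> V\<close> \<open>b \<in> V\<close> \<open>c \<in> V\<close> \<open>d \<in> V\<close> show False
    unfolding cograph_def by blast
qed

definition sparse_bounded :: "nat \<Rightarrow> ('a \<Rightarrow> 'a \<Rightarrow> bool) \<Rightarrow> 'a set \<Rightarrow> nat \<Rightarrow> bool" where
  "sparse_bounded k E V y \<longleftrightarrow> (\<forall>S\<subseteq>V. k_sparse k E S \<longrightarrow> card S \<le> y)"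

definition dense_bounded :: "nat \<Rightarrow> ('a \<Rightarrow> 'a \<Rightarrow> bool) \<Rightarrow> 'a set \<Rightarrow> nat \<Rightarrow> bool" where
  "dense_bounded k E V x \<longleftrightarrow> (\<forall>S\<subseteq>V. k_dense k E S \<longrightarrow> card S \<le> x)"

lemma dense_bounded_eq_sparse_bounded_compl:
  "dense_bounded k E V x \<longleftrightarrow> sparse_bounded k (compl_graph E) V x"
  unfolding dense_bounded_def sparse_bounded_def k_dense_def ..

lemma k_dense_compl_iff:
  "simple_graph V E \<Longrightarrow> S \<subseteq> V \<Longrightarrow> k_dense k (compl_graph E) S \<longleftrightarrow> k_sparse k E S"
  unfolding k_dense_def k_sparse_def
  by (simp add: compl_compl_graph[of V E] subset_iff cong: conj_cong)

lemma sparse_bounded_eq_dense_bounded_compl: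
  "simple_graph V E \<Longrightarrow> sparse_bounded k E V y \<longleftrightarrow> dense_bounded k (compl_graph E) V y"
  unfolding dense_bounded_def sparse_bounded_def using k_dense_compl_iff by blast

lemma sparse_bounded_subset:
  "sparse_bounded k E V y \<Longrightarrow> W \<subseteq> V \<Longrightarrow> sparse_bounded k E W y"
  unfolding sparse_bounded_def by blast

lemma dense_bounded_subset:
  "dense_bounded k E V x \<Longrightarrow> W \<subseteq> V \<Longrightarrow> dense_bounded k E W x"
  unfolding dense_bounded_def by blast

lemma k_sparse_subset: "finite S \<Longrightarrow> T \<subseteq> S \<Longrightarrow> k_sparse k E S \<Longrightarrow> k_sparse k E T"
  unfolding k_sparse_def
proof
  fix v assume "finite S" "T \<subseteq> S" "\<forall>v\<in>S. card {u \<in> S. E v u} \<le> k" "v \<in> T"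
  then have "card {u \<in> T. E v u} \<le> card {u \<in> S. E v u}" by (intro card_mono) auto
  then show "card {u \<in> T. E v u} \<le> k" using \<open>\<forall>v\<in>S. _\<close> \<open>v \<in> T\<close> \<open>T \<subseteq> S\<close> by fastforce
qed

lemma card_neighbours_le:
  assumes "k_sparse k E S" "finite S" "v \<in> S" "T \<subseteq> S" "\<forall>u\<in>T. E v u"
  shows "card T \<le> k"
proof -
  have "card T \<le> card {u \<in> S. E v u}" using assms by (intro card_mono) auto
  with assms show ?thesis unfolding k_sparse_def by fastforce
qed

lemma card_non_neighbours_le:
  assumes "k_dense k E S" "finite S" "v \<in> S" "T \<subseteq> S" "\<forall>u\<in>T. u \<noteq> v \<and> \<not> E v u"
  shows "card T \<le> k"
  using assms card_neighbours_le[of k "compl_graph E" S v T]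
  unfolding k_dense_def compl_graph_def by auto

lemma card_le_Suc_card_Diff_singleton: "finite T \<Longrightarrow> card T \<le> Suc (card (T - {v}))"
  by (cases "v \<in> T") (simp_all add: card_Suc_Diff1)

lemma card_le_if_subset_image: "A \<subseteq> f ` {..<n} \<Longrightarrow> card A \<le> n"
  using card_mono[of "f ` {..<n}" A] card_image_le[of "{..<n}" f] by simp

lemma card_le_Suc_if_neighbours:
  assumes "k_sparse k E S" "finite S" "v \<in> T" "T \<subseteq> S" "\<forall>u\<in>T - {v}. E v u"
  shows "card T \<le> k + 1"
proof -
  have "card (T - {v}) \<le> k" using assms by (intro card_neighbours_le[of k E S v]) auto
  moreover have "finite T" using assms(4,2) by (rule finite_subset)
  ultimately show ?thesis using card_le_Suc_card_Diff_singleton[of T v] by simp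
qed

lemma card_le_Suc_if_non_neighbours:
  assumes "k_dense k E S" "finite S" "v \<in> T" "T \<subseteq> S" "\<forall>u\<in>T - {v}. \<not> E v u"
  shows "card T \<le> k + 1"
  using assms card_le_Suc_if_neighbours[of k "compl_graph E" S v T]
  unfolding k_dense_def compl_graph_def by auto

lemma card_le_if_neighbours_except:
  assumes "k_sparse k E S" "finite S" "v \<in> S" "finite I" "\<forall>u\<in>S - insert v I. E v u"
  shows "card S \<le> k + 1 + card I"
proof -
  have "card (S - insert v I) \<le> k" using assms by (intro card_neighbours_le[of k E S v]) auto
  moreover have "card (S \<inter> insert v I) \<le> Suc (card I)"
    using card_mono[of "insert v I" "S \<inter> insert v I"] card_insert_le_m1[of "Suc (card I)" I v]
      assms(4) by auto
  moreover have "card S = card (S \<inter> insert v I) + card (S - insert v I)"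
    using assms(2) by (rule card_Int_Diff)
  ultimately show ?thesis by linarith
qed

lemma k_dense_card_le_if_split:
  assumes "k_dense k E S" "finite S" "C \<subseteq> S" "C \<noteq> {}" "S - C \<noteq> {}"
    and no_edges: "\<forall>a\<in>C. \<forall>b\<in>S - C. \<not> E a b \<and> \<not> E b a"
  shows "card S \<le> 2 * k"
proof -
  obtain v w where "v \<in> C" "w \<in> S - C" using assms(4,5) by blast
  have "card (S - C) \<le> k"
    using assms(1,2)
    by (rule card_non_neighbours_le[of k E S v]) (use \<open>v \<in> C\<close> assms(3) no_edges in auto)
  moreover have "card C \<le> k"
    using assms(1,2)
    by (rule card_non_neighbours_le[of k E S w]) (use \<open>w \<in> S - C\<close> assms(3) no_edges in auto)
  moreover have "card S = card C + card (S - C)"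
    using card_Int_Diff[OF assms(2), of C] assms(3) by (simp add: Int_absorb1)
  ultimately show ?thesis by linarith
qed

lemma k_sparse_if_card_le:
  assumes "simple_graph V E" "S \<subseteq> V" "card S \<le> k + 1"
  shows "k_sparse k E S"
  unfolding k_sparse_def
proof
  fix v assume "v \<in> S"
  have "finite S" using assms finite_subset by (auto simp: simple_graph_def)
  have "{u \<in> S. E v u} \<subseteq> S - {v}" using assms by (auto simp: simple_graph_def)
  then have "card {u \<in> S. E v u} \<le> card (S - {v})" using \<open>finite S\<close> by (intro card_mono) auto
  also have "\<dots> = card S - 1" using \<open>v \<in> S\<close> \<open>finite S\<close> by simp
  finally show "card {u \<in> S. E v u} \<le> k" using assms(3) by simp
qed

lemma ex_k_sparse_card_eq_iff:
  assumes "finite V"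
  shows "(\<exists>S\<subseteq>V. card S = Suc y \<and> k_sparse k E S) \<longleftrightarrow> \<not> sparse_bounded k E V y"
proof
  assume "\<exists>S\<subseteq>V. card S = Suc y \<and> k_sparse k E S"
  then obtain S where "S \<subseteq> V" "card S = Suc y" "k_sparse k E S" by auto
  then show "\<not> sparse_bounded k E V y" unfolding sparse_bounded_def by (metis Suc_n_not_le_n)
next
  assume "\<not> sparse_bounded k E V y"
  then obtain S where S: "S \<subseteq> V" "k_sparse k E S" "Suc y \<le> card S"
    unfolding sparse_bounded_def by (auto simp: not_le)
  obtain T where T: "T \<subseteq> S" "card T = Suc y" using S(3) by (rule obtain_subset_with_card_n)
  have "finite S" using S(1) assms by (rule finite_subset)
  then have "k_sparse k E T" using T(1) S(2) by (rule k_sparse_subset)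
  with S(1) T show "\<exists>S\<subseteq>V. card S = Suc y \<and> k_sparse k E S" by blast
qed

lemma ex_k_dense_card_eq_iff:
  "finite V \<Longrightarrow> (\<exists>S\<subseteq>V. card S = Suc x \<and> k_dense k E S) \<longleftrightarrow> \<not> dense_bounded k E V x"
  unfolding k_dense_def dense_bounded_eq_sparse_bounded_compl by (rule ex_k_sparse_card_eq_iff)

lemma card_le_if_sparse_bounded:
  assumes "simple_graph V E" "sparse_bounded k E V y" "y \<le> k"
  shows "card V \<le> y"
proof (rule ccontr)
  assume "\<not> card V \<le> y"
  then obtain S where S: "S \<subseteq> V" "card S = Suc y"
    by (meson not_less_eq_eq obtain_subset_with_card_n)
  have "k_sparse k E S" using assms(1) S(1) by (rule k_sparse_if_card_le) (simp add: S(2) assms(3))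
  then have "card S \<le> y" using assms(2) S(1) unfolding sparse_bounded_def by blast
  with S(2) show False by simp
qed

lemma ex_maximum_k_sparse:
  assumes "finite V"
  obtains S where "S \<subseteq> V" "k_sparse k E S" "sparse_bounded k E V (card S)"
proof -
  have "\<exists>S. (S \<subseteq> V \<and> k_sparse k E S) \<and> (\<forall>T. T \<subseteq> V \<and> k_sparse k E T \<longrightarrow> card T \<le> card S)"
    by (rule ex_has_greatest_nat[where k = "{}" and b = "Suc (card V)"])
      (auto simp: k_sparse_def assms card_mono le_imp_less_Suc)
  then show ?thesis using that unfolding sparse_bounded_def by blast
qed

lemma k_sparse_Un:
  assumes "k_sparse k E S" "k_sparse k E T"
    and "\<forall>u\<in>S. \<forall>v\<in>T. \<not> E u v \<and> \<not> E v u"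
  shows "k_sparse k E (S \<union> T)"
  unfolding k_sparse_def
proof
  fix v assume "v \<in> S \<union> T"
  then show "card {u \<in> S \<union> T. E v u} \<le> k"
  proof
    assume "v \<in> S"
    then have "{u \<in> S \<union> T. E v u} = {u \<in> S. E v u}" using assms(3) by auto
    with \<open>v \<in> S\<close> assms(1) show ?thesis unfolding k_sparse_def by simp
  next
    assume "v \<in> T"
    then have "{u \<in> S \<union> T. E v u} = {u \<in> T. E v u}" using assms(3) by auto
    with \<open>v \<in> T\<close> assms(2) show ?thesis unfolding k_sparse_def by simp
  qed
qed

definition co_bound :: "nat \<Rightarrow> nat \<Rightarrow> nat \<Rightarrow> nat" where
  "co_bound m x y = x div m * y + x mod m * (y div m)"

lemma co_bound_expand:
  "co_bound m x y = x div m * (y div m) * m + x div m * (y mod m) + x mod m * (y div m)"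
proof -
  have "x div m * y = x div m * (y div m) * m + x div m * (y mod m)"
    by (metis add_mult_distrib2 div_mult_mod_eq mult.assoc)
  then show ?thesis unfolding co_bound_def by simp
qed

lemma co_bound_commute: "co_bound m x y = co_bound m y x"
  unfolding co_bound_expand by (simp add: algebra_simps)

lemma co_bound_eq:
  assumes "0 < m"
  shows "co_bound m x y = (x * y - x mod m * (y mod m)) div m"
proof -
  define a r b s where "a = x div m" "r = x mod m" "b = y div m" "s = y mod m"
  have x: "x = a * m + r" and y: "y = b * m + s" unfolding a_r_b_s_def by simp_all
  have "co_bound m x y = a * b * m + a * s + r * b" unfolding co_bound_expand a_r_b_s_def ..
  moreover have "x * y = m * (a * b * m + a * s + r * b) + r * s"
    unfolding x y by (simp add: algebra_simps)
  ultimately have "x * y - r * s = m * co_bound m x y" by simp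
  then show ?thesis using assms unfolding a_r_b_s_def by simp
qed

lemma co_bound_mono: "y \<le> y' \<Longrightarrow> co_bound m x y \<le> co_bound m x y'"
  unfolding co_bound_def by (intro add_mono mult_le_mono div_le_mono) auto

lemma co_bound_superadditive: "co_bound m x y + co_bound m x y' \<le> co_bound m x (y + y')"
proof -
  have "y div m + y' div m \<le> (y + y') div m" using div_add1_eq[of y y' m] by linarith
  then have "x mod m * (y div m + y' div m) \<le> x mod m * ((y + y') div m)" by (rule mult_le_mono2)
  then show ?thesis unfolding co_bound_def by (simp add: add_mult_distrib2)
qed

lemma le_co_bound:
  assumes "0 < m" "m \<le> x"
  shows "y \<le> co_bound m x y"
proof -
  have "1 \<le> x div m" using assms div_le_mono[of m x m] by simp
  then have "y \<le> x div m * y" by simp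
  also have "\<dots> \<le> co_bound m x y" unfolding co_bound_def by simp
  finally show ?thesis .
qed

definition disconnected_by :: "'a set \<Rightarrow> ('a \<Rightarrow> 'a \<Rightarrow> bool) \<Rightarrow> 'a set \<Rightarrow> bool" where
  "disconnected_by V E A \<longleftrightarrow> A \<subseteq> V \<and> A \<noteq> {} \<and> A \<noteq> V \<and> (\<forall>a\<in>A. \<forall>b\<in>V - A. \<not> E a b)"

lemma cograph_disconnected_if_non_neighbour_in_part:
  assumes cg: "cograph V E" and v: "v \<in> V"
    and parts: "V - {v} = P \<union> Q" "P \<inter> Q = {}" "Q \<noteq> {}"
    and no_edges: "\<forall>p\<in>P. \<forall>q\<in>Q. \<not> E p q"
    and u: "u \<in> P" "\<not> E v u"
  shows "\<exists>A. disconnected_by V E A"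
proof -
  have sg: "simple_graph V E" using cg by (simp add: cograph_def)
  have sym: "E b a" if "a \<in> V" "b \<in> V" "E a b" for a b
    using sg that unfolding simple_graph_def by blast
  have irrefl: "\<not> E a a" if "a \<in> V" for a
    using sg that unfolding simple_graph_def by blast
  have "v \<notin> P" "v \<notin> Q" "P \<subseteq> V" "Q \<subseteq> V" using parts by auto
  show ?thesis
  proof (cases "\<exists>q\<in>Q. E v q")
    case False
    have "disconnected_by V E Q"
      unfolding disconnected_by_def
    proof (intro conjI ballI)
      fix a b assume a: "a \<in> Q" and b: "b \<in> V - Q"
      then consider "b = v" | "b \<in> P" using parts by blast
      then show "\<not> E a b"
        using a b False no_edges v \<open>P \<subseteq> V\<close> \<open>Q \<subseteq> V\<close> by cases (blast dest: sym)+
    qed (use parts \<open>v \<notin> Q\<close> v in auto)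
    then show ?thesis ..
  next
    case True
    then obtain z where z: "z \<in> Q" "E v z" by blast
    show ?thesis
    proof (cases "\<exists>w\<in>P. \<exists>u'\<in>P. E v w \<and> \<not> E v u' \<and> E w u'")
      case True
      then obtain w u' where wu': "w \<in> P" "u' \<in> P" "E v w" "\<not> E v u'" "E w u'" by blast
      \<comment> \<open>then u'-w-v-z is an induced path\<close>
      have "distinct [u', w, v, z]"
        using wu' z parts irrefl \<open>P \<subseteq> V\<close> by auto
      moreover have "E u' w" "E w v" "\<not> E u' v" "\<not> E w z" "\<not> E u' z"
        using wu' z no_edges v \<open>P \<subseteq> V\<close> \<open>Q \<subseteq> V\<close> by (blast dest: sym)+
      moreover have "u' \<in> V" "w \<in> V" "z \<in> V" using wu' z \<open>P \<subseteq> V\<close> \<open>Q \<subseteq> V\<close> by auto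
      ultimately show ?thesis using cg v \<open>E v z\<close> unfolding cograph_def by blast
    next
      case False
      \<comment> \<open>then the non-neighbours of v in P have no neighbours outside themselves\<close>
      have "disconnected_by V E {p \<in> P. \<not> E v p}"
        unfolding disconnected_by_def
      proof (intro conjI ballI)
        fix a b assume a: "a \<in> {p \<in> P. \<not> E v p}" and b: "b \<in> V - {p \<in> P. \<not> E v p}"
        then consider "b = v" | "b \<in> Q" | "b \<in> P" "E v b" using parts by blast
        then show "\<not> E a b"
          using a b False no_edges v \<open>P \<subseteq> V\<close> by cases (blast dest: sym)+
      qed (use u \<open>v \<notin> P\<close> \<open>P \<subseteq> V\<close> v in auto)
      then show ?thesis ..
    qed
  qed
qed

lemma cograph_disconnected_by_insert:
  assumes cg: "cograph V E" and v: "v \<in> V" and A: "disconnected_by (V - {v}) E A"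
  shows "(\<exists>A'. disconnected_by V E A') \<or> (\<exists>A'. disconnected_by V (compl_graph E) A')"
proof (cases "\<forall>u\<in>V - {v}. E v u")
  case True
  have "disconnected_by V (compl_graph E) {v}"
    using True v A unfolding disconnected_by_def compl_graph_def by auto
  then show ?thesis by blast
next
  case False
  then obtain u where u: "u \<in> V - {v}" "\<not> E v u" by blast
  define B where "B = V - {v} - A"
  have sg: "simple_graph V E" using cg by (simp add: cograph_def)
  have parts: "V - {v} = A \<union> B" "A \<inter> B = {}" "A \<noteq> {}" "B \<noteq> {}"
    using A unfolding disconnected_by_def B_def by auto
  have no_edges: "\<forall>a\<in>A. \<forall>b\<in>B. \<not> E a b" "\<forall>b\<in>B. \<forall>a\<in>A. \<not> E b a"
    using A sg unfolding disconnected_by_def simple_graph_def B_def by blast+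
  have "u \<in> A \<or> u \<in> B" using u parts by blast
  then have "\<exists>A'. disconnected_by V E A'"
  proof
    assume "u \<in> A"
    with parts no_edges(1) u(2) show ?thesis
      by (intro cograph_disconnected_if_non_neighbour_in_part[OF cg v, of A B u]) auto
  next
    assume "u \<in> B"
    with parts no_edges(2) u(2) show ?thesis
      by (intro cograph_disconnected_if_non_neighbour_in_part[OF cg v, of B A u]) auto
  qed
  then show ?thesis ..
qed

lemma disconnected_by_compl_compl:
  "disconnected_by V (compl_graph (compl_graph E)) A \<Longrightarrow> disconnected_by V E A"
  unfolding disconnected_by_def
proof (elim conjE, intro conjI ballI)
  fix a b assume "\<forall>a\<in>A. \<forall>b\<in>V - A. \<not> compl_graph (compl_graph E) a b" "a \<in> A" "b \<in> V - A"
  then show "\<not> E a b" unfolding compl_graph_def by auto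
qed

theorem cograph_disconnected_or_compl_disconnected:
  assumes "cograph V E" "2 \<le> card V"
  shows "(\<exists>A. disconnected_by V E A) \<or> (\<exists>A. disconnected_by V (compl_graph E) A)"
  using assms
proof (induction "card V" arbitrary: V E rule: less_induct)
  case less
  have "finite V" using less.prems(2) card.infinite by fastforce
  obtain v where v: "v \<in> V" using less.prems(2) by fastforce
  show ?case
  proof (cases "card V = 2")
    case True
    then obtain u where "V = {v, u}" "u \<noteq> v"
      using v by (metis card_2_iff empty_iff insert_commute insert_iff)
    then have "disconnected_by V E {v} \<or> disconnected_by V (compl_graph E) {v}"
      unfolding disconnected_by_def compl_graph_def by auto
    then show ?thesis by blast
  next
    case False
    have "cograph (V - {v}) E" using less.prems(1) by (rule cograph_subset) blast
    moreover have "card (V - {v}) < card V" "2 \<le> card (V - {v})"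
      using v \<open>finite V\<close> False less.prems(2) by (simp_all add: card_Diff1_less)
    ultimately have "(\<exists>A. disconnected_by (V - {v}) E A) \<or>
        (\<exists>A. disconnected_by (V - {v}) (compl_graph E) A)"
      using less.hyps by blast
    then show ?thesis
    proof (elim disjE exE)
      fix A assume "disconnected_by (V - {v}) E A"
      then show ?thesis using cograph_disconnected_by_insert[OF less.prems(1) v] by blast
    next
      fix A assume "disconnected_by (V - {v}) (compl_graph E) A"
      then show ?thesis
        using cograph_disconnected_by_insert[OF cograph_compl[OF less.prems(1)] v]
          disconnected_by_compl_compl by blast
    qed
  qed
qed

lemma ex_maximum_k_sparse_co_bound:
  assumes "simple_graph P E" "k < x"
    and bound: "\<And>y'. k < y' \<Longrightarrow> sparse_bounded k E P y' \<Longrightarrow> card P \<le> co_bound (k + 1) x y'"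
  shows "\<exists>S\<subseteq>P. k_sparse k E S \<and> card P \<le> co_bound (k + 1) x (card S)"
proof -
  have "finite P" using assms(1) by (simp add: simple_graph_def)
  then obtain S where S: "S \<subseteq> P" "k_sparse k E S" "sparse_bounded k E P (card S)"
    by (rule ex_maximum_k_sparse)
  have "card P \<le> co_bound (k + 1) x (card S)"
  proof (cases "k < card S")
    case True
    show ?thesis using bound[OF True S(3)] .
  next
    case False
    have "card P \<le> card S" using assms(1) S(3) by (rule card_le_if_sparse_bounded) (use False in simp)
    also have "\<dots> \<le> co_bound (k + 1) x (card S)" using \<open>k < x\<close> by (intro le_co_bound) auto
    finally show ?thesis .
  qed
  with S show ?thesis by blast
qed

lemma card_le_co_bound_if_disconnected:
  assumes cg: "cograph V E" and A: "disconnected_by V E A" and "k < x"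
    and sparse: "sparse_bounded k E V y"
    and smaller: "\<And>P y'. P \<subset> V \<Longrightarrow> k < y' \<Longrightarrow> sparse_bounded k E P y' \<Longrightarrow>
      card P \<le> co_bound (k + 1) x y'"
  shows "card V \<le> co_bound (k + 1) x y"
proof -
  have sg: "simple_graph V E" using cg by (simp add: cograph_def)
  have "finite V" using sg by (simp add: simple_graph_def)
  have part: "\<exists>S\<subseteq>P. k_sparse k E S \<and> card P \<le> co_bound (k + 1) x (card S)" if "P \<subset> V" for P
    using sg that \<open>k < x\<close> smaller[OF that]
    by (intro ex_maximum_k_sparse_co_bound) (auto intro: simple_graph_subset)
  define B where "B = V - A"
  have "A \<subset> V" "B \<subset> V" "A \<inter> B = {}" "V = A \<union> B"
    using A unfolding disconnected_by_def B_def by auto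
  then obtain S1 S2 where S1: "S1 \<subseteq> A" "k_sparse k E S1" "card A \<le> co_bound (k + 1) x (card S1)"
    and S2: "S2 \<subseteq> B" "k_sparse k E S2" "card B \<le> co_bound (k + 1) x (card S2)"
    using part by meson
  have "\<forall>u\<in>S1. \<forall>v\<in>S2. \<not> E u v \<and> \<not> E v u"
    using A S1(1) S2(1) sg unfolding disconnected_by_def simple_graph_def B_def by blast
  then have "k_sparse k E (S1 \<union> S2)" using S1(2) S2(2) by (intro k_sparse_Un)
  moreover have "S1 \<union> S2 \<subseteq> V" using S1(1) S2(1) \<open>V = A \<union> B\<close> by blast
  ultimately have "card (S1 \<union> S2) \<le> y" using sparse unfolding sparse_bounded_def by blast
  moreover have "card (S1 \<union> S2) = card S1 + card S2"
    using S1(1) S2(1) \<open>A \<inter> B = {}\<close> \<open>finite V\<close> \<open>V = A \<union> B\<close>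
    by (intro card_Un_disjoint) (auto intro: finite_subset)
  ultimately have "card S1 + card S2 \<le> y" by simp
  have "card V = card A + card B"
    using \<open>A \<inter> B = {}\<close> \<open>finite V\<close> \<open>V = A \<union> B\<close> by (simp add: card_Un_disjoint)
  also have "\<dots> \<le> co_bound (k + 1) x (card S1) + co_bound (k + 1) x (card S2)"
    using S1(3) S2(3) by (rule add_mono)
  also have "\<dots> \<le> co_bound (k + 1) x (card S1 + card S2)" by (rule co_bound_superadditive)
  also have "\<dots> \<le> co_bound (k + 1) x y" using \<open>card S1 + card S2 \<le> y\<close> by (rule co_bound_mono)
  finally show ?thesis .
qed

theorem cograph_card_le_co_bound:
  assumes "cograph V E" "k < x" "k < y" "dense_bounded k E V x" "sparse_bounded k E V y"
  shows "card V \<le> co_bound (k + 1) x y"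
  using assms
proof (induction "card V" arbitrary: V E x y rule: less_induct)
  case less
  have "finite V" using less.prems(1) by (simp add: cograph_def simple_graph_def)
  have disconnected: "card V \<le> co_bound (k + 1) x' y'"
    if "cograph V E'" "k < x'" "dense_bounded k E' V x'" "sparse_bounded k E' V y'"
      "disconnected_by V E' A" for E' x' y' A
  proof (rule card_le_co_bound_if_disconnected[OF that(1,5,2,4)])
    fix P y' assume "P \<subset> V" "k < y'" "sparse_bounded k E' P y'"
    moreover have "card P < card V" using \<open>finite V\<close> \<open>P \<subset> V\<close> by (rule psubset_card_mono)
    moreover have "cograph P E'" "dense_bounded k E' P x'"
      using that(1,3) \<open>P \<subset> V\<close> by (auto intro: cograph_subset dense_bounded_subset)
    ultimately show "card P \<le> co_bound (k + 1) x' y'" using less.hyps that(2) by blast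
  qed
  show ?case
  proof (cases "2 \<le> card V")
    case False
    then have "card V \<le> y" using less.prems(3) by linarith
    also have "\<dots> \<le> co_bound (k + 1) x y" using less.prems(2) by (intro le_co_bound) auto
    finally show ?thesis .
  next
    case True
    with less.prems(1) consider A where "disconnected_by V E A"
      | A where "disconnected_by V (compl_graph E) A"
      using cograph_disconnected_or_compl_disconnected by blast
    then show ?thesis
    proof cases
      case 1
      then show ?thesis using disconnected less.prems by blast
    next
      case 2
      have "simple_graph V E" using less.prems(1) by (simp add: cograph_def)
      then have "card V \<le> co_bound (k + 1) y x"
        using disconnected[OF cograph_compl[OF less.prems(1)] less.prems(3) _ _ 2] less.prems(4,5)
        by (simp add: dense_bounded_eq_sparse_bounded_compl sparse_bounded_eq_dense_bounded_compl)
      then show ?thesis by (simp add: co_bound_commute)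
    qed
  qed
qed

text \<open>The extremal cograph for m = k + 1, x = a m + r and y = b m + s (0 \<le> r, s < m):
  b - 1 disjoint cliques Clique c _ of size x, and beside them the join of a clique of r hubs
  with a mutually joined groups g < a, each consisting of a clique Core g _ of size m and
  s isolated vertices Iso g _.\<close>
datatype extremal_vertex =
  is_Clique: Clique nat nat | is_Hub: Hub nat | Iso nat nat | Core nat nat

fun extremal_adj :: "extremal_vertex \<Rightarrow> extremal_vertex \<Rightarrow> bool" where
  "extremal_adj (Clique c _) (Clique c' _) \<longleftrightarrow> c = c'"
| "extremal_adj (Clique _ _) _ \<longleftrightarrow> False"
| "extremal_adj _ (Clique _ _) \<longleftrightarrow> False"
| "extremal_adj (Hub _) _ \<longleftrightarrow> True"
| "extremal_adj _ (Hub _) \<longleftrightarrow> True"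
| "extremal_adj (Core _ _) (Core _ _) \<longleftrightarrow> True"
| "extremal_adj (Iso g _) (Iso g' _) \<longleftrightarrow> g \<noteq> g'"
| "extremal_adj (Iso g _) (Core g' _) \<longleftrightarrow> g \<noteq> g'"
| "extremal_adj (Core g _) (Iso g' _) \<longleftrightarrow> g \<noteq> g'"

lemma extremal_adj_commute: "extremal_adj u v = extremal_adj v u"
  by (cases u; cases v) auto

text \<open>Inside the cliques a path of length two closes to a triangle; outside them, two distinct
  vertices are non-adjacent only within one group and not both cores, so the three non-edges of
  an induced path a-b-c-d put it into one group, where its edges force a and c to be cores.\<close>
lemma extremal_adj_no_P4:
  assumes "extremal_adj a b" "extremal_adj b c" "extremal_adj c d"
    and "\<not> extremal_adj a c" "\<not> extremal_adj b d" "\<not> extremal_adj a d"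
  shows False
  using assms by (cases a; cases b; cases c; cases d) auto

definition extremal_edge :: "extremal_vertex \<Rightarrow> extremal_vertex \<Rightarrow> bool" where
  "extremal_edge u v \<longleftrightarrow> u \<noteq> v \<and> extremal_adj u v"

definition extremal_vertices :: "nat \<Rightarrow> nat \<Rightarrow> nat \<Rightarrow> extremal_vertex set" where
  "extremal_vertices m x y =
     case_prod Clique ` ({..<y div m - 1} \<times> {..<x}) \<union> Hub ` {..<x mod m} \<union>
     case_prod Iso ` ({..<x div m} \<times> {..<y mod m}) \<union> case_prod Core ` ({..<x div m} \<times> {..<m})"

lemma mem_extremal_vertices [simp]:
  "Clique c t \<in> extremal_vertices m x y \<longleftrightarrow> c < y div m - 1 \<and> t < x"
  "Hub t \<in> extremal_vertices m x y \<longleftrightarrow> t < x mod m"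
  "Iso g t \<in> extremal_vertices m x y \<longleftrightarrow> g < x div m \<and> t < y mod m"
  "Core g t \<in> extremal_vertices m x y \<longleftrightarrow> g < x div m \<and> t < m"
  unfolding extremal_vertices_def by auto

lemma finite_extremal_vertices: "finite (extremal_vertices m x y)"
  unfolding extremal_vertices_def by simp

lemma card_extremal_vertices:
  assumes "0 < m" "m \<le> y"
  shows "card (extremal_vertices m x y) = co_bound m x y"
proof -
  have "card (case_prod Clique ` A) = card A" "card (Hub ` B) = card B"
    "card (case_prod Iso ` A) = card A" "card (case_prod Core ` A) = card A" for A B
    by (auto intro!: card_image simp: inj_on_def)
  then have "card (extremal_vertices m x y) =
      (y div m - 1) * x + x mod m + x div m * (y mod m) + x div m * m"
    unfolding extremal_vertices_def
    by (subst card_Un_disjoint; auto simp: card_cartesian_product)+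
  also have "\<dots> = co_bound m x y"
  proof -
    have "y div m \<noteq> 0" using assms by (simp add: div_eq_0_iff)
    then obtain a r b s where ab: "x div m = a" "x mod m = r" "y div m = Suc b" "y mod m = s"
      using not0_implies_Suc by blast
    then have "x = a * m + r" "y = Suc b * m + s" using div_mult_mod_eq by metis+
    then show ?thesis unfolding co_bound_def ab by (simp add: algebra_simps)
  qed
  finally show ?thesis .
qed

lemma cograph_extremal_vertices: "cograph (extremal_vertices m x y) extremal_edge"
  unfolding cograph_def
proof (intro conjI notI)
  show "simple_graph (extremal_vertices m x y) extremal_edge"
    unfolding simple_graph_def extremal_edge_def
    using finite_extremal_vertices extremal_adj_commute by auto
  let ?V = "extremal_vertices m x y"
  assume "\<exists>a\<in>?V. \<exists>b\<in>?V. \<exists>c\<in>?V. \<exists>d\<in>?V.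
    distinct [a, b, c, d] \<and> extremal_edge a b \<and> extremal_edge b c \<and> extremal_edge c d \<and>
    \<not> extremal_edge a c \<and> \<not> extremal_edge b d \<and> \<not> extremal_edge a d"
  then obtain a b c d where "extremal_adj a b" "extremal_adj b c" "extremal_adj c d"
    "\<not> extremal_adj a c" "\<not> extremal_adj b d" "\<not> extremal_adj a d"
    unfolding extremal_edge_def by auto
  then show False by (rule extremal_adj_no_P4)
qed

lemma extremal_adj_Clique_iff:
  "extremal_adj (Clique c t) u \<longleftrightarrow> (\<exists>t'. u = Clique c t')"
  "extremal_adj u (Clique c t) \<longleftrightarrow> (\<exists>t'. u = Clique c t')"
  by (cases u; auto) (cases u; auto)

lemma card_le_if_k_dense_outside_cliques:
  assumes S: "S \<subseteq> extremal_vertices (k + 1) x y" and dense: "k_dense k extremal_edge S"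
    and no_clique: "\<forall>v\<in>S. \<not> is_Clique v"
  shows "card S \<le> x"
proof -
  have "finite S" using S finite_extremal_vertices by (rule finite_subset)
  define H where "H = {v \<in> S. is_Hub v}"
  define G where "G g = {v \<in> S. \<exists>t. v = Iso g t \<or> v = Core g t}" for g
  have "S = H \<union> (\<Union>g<x div (k + 1). G g)"
  proof
    show "S \<subseteq> H \<union> (\<Union>g<x div (k + 1). G g)"
    proof
      fix v assume "v \<in> S"
      with no_clique S show "v \<in> H \<union> (\<Union>g<x div (k + 1). G g)"
        unfolding H_def G_def by (cases v) auto
    qed
  qed (auto simp: H_def G_def)
  then have "card S \<le> card H + card (\<Union>g<x div (k + 1). G g)"
    by (simp only: card_Un_le)
  also have "\<dots> \<le> x mod (k + 1) + x div (k + 1) * (k + 1)"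
  proof (rule add_mono)
    have "H \<subseteq> Hub ` {..<x mod (k + 1)}"
    proof
      fix v assume "v \<in> H"
      with S show "v \<in> Hub ` {..<x mod (k + 1)}" unfolding H_def by (cases v) auto
    qed
    then show "card H \<le> x mod (k + 1)" by (rule card_le_if_subset_image)
    have "card (G g) \<le> k + 1" for g
    proof (cases "\<exists>t. Iso g t \<in> G g")
      case True
      then obtain t where "Iso g t \<in> G g" by blast
      with dense \<open>finite S\<close> show ?thesis
        by (rule card_le_Suc_if_non_neighbours) (auto simp: G_def extremal_edge_def)
    next
      case False
      then have "G g \<subseteq> Core g ` {..<k + 1}" using S unfolding G_def by auto
      then show ?thesis by (rule card_le_if_subset_image)
    qed
    then have "(\<Sum>g<x div (k + 1). card (G g)) \<le> x div (k + 1) * (k + 1)"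
      using sum_bounded_above[of "{..<x div (k + 1)}" "\<lambda>g. card (G g)" "k + 1"] by simp
    then show "card (\<Union>g<x div (k + 1). G g) \<le> x div (k + 1) * (k + 1)"
      using card_UN_le[of "{..<x div (k + 1)}" G] by simp
  qed
  also have "\<dots> = x" by (rule mod_div_mult_eq)
  finally show ?thesis .
qed

lemma dense_bounded_extremal_vertices:
  assumes "y div (k + 1) \<le> 1 \<or> 2 * k \<le> x"
  shows "dense_bounded k extremal_edge (extremal_vertices (k + 1) x y) x"
  unfolding dense_bounded_def
proof (intro allI impI)
  fix S assume S: "S \<subseteq> extremal_vertices (k + 1) x y" and dense: "k_dense k extremal_edge S"
  have "finite S" using S finite_extremal_vertices by (rule finite_subset)
  show "card S \<le> x"
  proof (cases "\<exists>v\<in>S. is_Clique v")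
    case True
    then obtain c t where "Clique c t \<in> S" by (metis is_Clique_def)
    define C where "C = {v \<in> S. \<exists>t'. v = Clique c t'}"
    show ?thesis
    proof (cases "S = C")
      case True
      have "S \<subseteq> Clique c ` {..<x}"
      proof
        fix v assume "v \<in> S"
        then obtain t' where "v = Clique c t'" using True unfolding C_def by blast
        then show "v \<in> Clique c ` {..<x}" using S \<open>v \<in> S\<close> by auto
      qed
      then show ?thesis by (rule card_le_if_subset_image)
    next
      case False
      have "card S \<le> 2 * k"
        using dense \<open>finite S\<close>
      proof (rule k_dense_card_le_if_split)
        show "C \<subseteq> S" "C \<noteq> {}" "S - C \<noteq> {}"
          using \<open>Clique c t \<in> S\<close> False unfolding C_def by auto
        show "\<forall>a\<in>C. \<forall>b\<in>S - C. \<not> extremal_edge a b \<and> \<not> extremal_edge b a"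
          unfolding C_def extremal_edge_def by (auto simp: extremal_adj_Clique_iff)
      qed
      moreover have "2 * k \<le> x" using assms \<open>Clique c t \<in> S\<close> S by auto
      ultimately show ?thesis by linarith
    qed
  next
    case False
    with S dense show ?thesis by (intro card_le_if_k_dense_outside_cliques) auto
  qed
qed

lemma card_le_if_k_sparse_outside_cliques:
  assumes S: "S \<subseteq> extremal_vertices (k + 1) x y" and sparse: "k_sparse k extremal_edge S"
    and no_clique: "\<forall>v\<in>S. \<not> is_Clique v"
  shows "card S \<le> k + 1 + y mod (k + 1)"
proof -
  have "finite S" using S finite_extremal_vertices by (rule finite_subset)
  define I where "I g = Iso g ` {..<y mod (k + 1)}" for g
  have bound: "card S \<le> k + 1 + y mod (k + 1)"
    if "v \<in> S" "\<forall>u\<in>S - insert v (I g). extremal_edge v u" for v g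
  proof -
    have "card S \<le> k + 1 + card (I g)"
      using card_le_if_neighbours_except[OF sparse \<open>finite S\<close> that(1) _ that(2)]
      by (simp add: I_def)
    moreover have "card (I g) \<le> y mod (k + 1)"
      unfolding I_def using card_image_le[of "{..<y mod (k + 1)}" "Iso g"] by simp
    ultimately show ?thesis by linarith
  qed
  show ?thesis
  proof (cases "\<exists>h. Hub h \<in> S")
    case True
    then obtain h where "Hub h \<in> S" by blast
    moreover have "\<forall>u\<in>S - insert (Hub h) (I 0). extremal_edge (Hub h) u"
    proof
      fix u assume "u \<in> S - insert (Hub h) (I 0)"
      with no_clique show "extremal_edge (Hub h) u" unfolding extremal_edge_def by (cases u) auto
    qed
    ultimately show ?thesis by (rule bound)
  next
    case no_hub: False
    show ?thesis
    proof (cases "\<exists>g t. Core g t \<in> S")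
      case True
      then obtain g t where "Core g t \<in> S" by blast
      moreover have "\<forall>u\<in>S - insert (Core g t) (I g). extremal_edge (Core g t) u"
      proof
        fix u assume "u \<in> S - insert (Core g t) (I g)"
        with no_clique no_hub S show "extremal_edge (Core g t) u"
          unfolding extremal_edge_def I_def by (cases u) auto
      qed
      ultimately show ?thesis by (rule bound)
    next
      case no_core: False
      show ?thesis
      proof (cases "S = {}")
        case False
        then obtain v where "v \<in> S" by blast
        then obtain g t where "v = Iso g t"
          using no_clique no_hub no_core by (cases v) auto
        have "\<forall>u\<in>S - insert v (I g). extremal_edge v u"
        proof
          fix u assume "u \<in> S - insert v (I g)"
          with no_clique no_hub no_core S show "extremal_edge v u"
            unfolding extremal_edge_def I_def \<open>v = Iso g t\<close> by (cases u) auto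
        qed
        with \<open>v \<in> S\<close> show ?thesis by (rule bound)
      qed simp
    qed
  qed
qed

lemma sparse_bounded_extremal_vertices:
  assumes "k < y"
  shows "sparse_bounded k extremal_edge (extremal_vertices (k + 1) x y) y"
  unfolding sparse_bounded_def
proof (intro allI impI)
  fix S assume S: "S \<subseteq> extremal_vertices (k + 1) x y" and sparse: "k_sparse k extremal_edge S"
  have "finite S" using S finite_extremal_vertices by (rule finite_subset)
  define b where "b = y div (k + 1) - 1"
  define C where "C c = {v \<in> S. \<exists>t. v = Clique c t}" for c
  define R where "R = {v \<in> S. \<not> is_Clique v}"
  have "S = (\<Union>c<b. C c) \<union> R"
  proof
    show "S \<subseteq> (\<Union>c<b. C c) \<union> R"
    proof
      fix v assume "v \<in> S"
      with S show "v \<in> (\<Union>c<b. C c) \<union> R"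
        unfolding C_def R_def b_def by (cases v) auto
    qed
  qed (auto simp: C_def R_def)
  then have "card S \<le> card (\<Union>c<b. C c) + card R"
    by (simp only: card_Un_le)
  also have "\<dots> \<le> b * (k + 1) + (k + 1 + y mod (k + 1))"
  proof (rule add_mono)
    have "card (C c) \<le> k + 1" for c
    proof (cases "C c = {}")
      case False
      then obtain t where "Clique c t \<in> C c" unfolding C_def by blast
      with sparse \<open>finite S\<close> show ?thesis
        by (rule card_le_Suc_if_neighbours) (auto simp: C_def extremal_edge_def)
    qed simp
    then have "(\<Sum>c<b. card (C c)) \<le> b * (k + 1)"
      using sum_bounded_above[of "{..<b}" "\<lambda>c. card (C c)" "k + 1"] by simp
    then show "card (\<Union>c<b. C c) \<le> b * (k + 1)"
      using card_UN_le[of "{..<b}" C] by simp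
    have "R \<subseteq> S" unfolding R_def by blast
    with S sparse \<open>finite S\<close> show "card R \<le> k + 1 + y mod (k + 1)"
      by (intro card_le_if_k_sparse_outside_cliques[of R k x y])
        (auto intro: k_sparse_subset simp: R_def)
  qed
  also have "\<dots> = y div (k + 1) * (k + 1) + y mod (k + 1)"
    using assms unfolding b_def by (cases "y div (k + 1)") (auto simp: div_eq_0_iff)
  also have "\<dots> = y" by (rule div_mult_mod_eq)
  finally show "card S \<le> y" .
qed

lemma ex_cograph_co_bound:
  assumes "k < x" "k < y"
  shows "\<exists>V :: extremal_vertex set. \<exists>E. cograph V E \<and> card V = co_bound (k + 1) x y \<and>
    dense_bounded k E V x \<and> sparse_bounded k E V y"
proof (cases "y div (k + 1) \<le> 1 \<or> 2 * k \<le> x")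
  case True
  then have "dense_bounded k extremal_edge (extremal_vertices (k + 1) x y) x"
    by (rule dense_bounded_extremal_vertices)
  moreover have "card (extremal_vertices (k + 1) x y) = co_bound (k + 1) x y"
    using assms by (intro card_extremal_vertices) auto
  ultimately show ?thesis
    using cograph_extremal_vertices sparse_bounded_extremal_vertices[OF assms(2)] by blast
next
  case False
  \<comment> \<open>then x div (k + 1) \<le> 1, and the complement of the construction for (y, x) works\<close>
  then have "x div (k + 1) \<le> 1" using less_mult_imp_div_less[of x 2 "k + 1"] by simp
  let ?V = "extremal_vertices (k + 1) y x"
  have sg: "simple_graph ?V extremal_edge"
    using cograph_extremal_vertices by (simp add: cograph_def)
  have "cograph ?V (compl_graph extremal_edge)"
    using cograph_extremal_vertices by (rule cograph_compl)
  moreover have "card ?V = co_bound (k + 1) x y"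
    using assms by (simp add: card_extremal_vertices co_bound_commute)
  moreover have "dense_bounded k (compl_graph extremal_edge) ?V x"
    using sparse_bounded_extremal_vertices[OF assms(1)] sparse_bounded_eq_dense_bounded_compl[OF sg]
    by blast
  moreover have "sparse_bounded k (compl_graph extremal_edge) ?V y"
    using dense_bounded_extremal_vertices \<open>x div (k + 1) \<le> 1\<close>
    unfolding dense_bounded_eq_sparse_bounded_compl by blast
  ultimately show ?thesis by blast
qed

lemma k_sparse_iso:
  assumes "inj_on h S" and E: "\<And>u v. u \<in> S \<Longrightarrow> v \<in> S \<Longrightarrow> E u v = F (h u) (h v)"
  shows "k_sparse k E S \<longleftrightarrow> k_sparse k F (h ` S)"
proof -
  have "{w \<in> h ` S. F (h v) w} = h ` {u \<in> S. E v u}" if "v \<in> S" for v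
    using that E by auto
  moreover have "card (h ` {u \<in> S. E v u}) = card {u \<in> S. E v u}" for v
    using assms(1) by (intro card_image) (auto intro: inj_on_subset)
  ultimately show ?thesis unfolding k_sparse_def by auto
qed

lemma cograph_iso:
  assumes "inj_on h V" and E: "\<And>u v. u \<in> V \<Longrightarrow> v \<in> V \<Longrightarrow> E u v = F (h u) (h v)"
    and "cograph (h ` V) F"
  shows "cograph V E"
  unfolding cograph_def
proof (intro conjI notI)
  have sg: "simple_graph (h ` V) F" using assms(3) by (simp add: cograph_def)
  have "finite V" using sg finite_image_iff[OF assms(1)] by (simp add: simple_graph_def)
  moreover have "E v u" if "u \<in> V" "v \<in> V" "E u v" for u v
    using sg that E[OF that(1,2)] E[OF that(2,1)] unfolding simple_graph_def by blast
  moreover have "\<not> E v v" if "v \<in> V" for v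
    using sg that E[OF that that] unfolding simple_graph_def by blast
  ultimately show "simple_graph V E" unfolding simple_graph_def by blast
  assume "\<exists>a\<in>V. \<exists>b\<in>V. \<exists>c\<in>V. \<exists>d\<in>V. distinct [a, b, c, d] \<and>
    E a b \<and> E b c \<and> E c d \<and> \<not> E a c \<and> \<not> E b d \<and> \<not> E a d"
  then obtain a b c d where V: "a \<in> V" "b \<in> V" "c \<in> V" "d \<in> V" and "distinct [a, b, c, d]"
    and "E a b" "E b c" "E c d" "\<not> E a c" "\<not> E b d" "\<not> E a d"
    by blast
  then have "distinct [h a, h b, h c, h d] \<and> F (h a) (h b) \<and> F (h b) (h c) \<and> F (h c) (h d) \<and>
      \<not> F (h a) (h c) \<and> \<not> F (h b) (h d) \<and> \<not> F (h a) (h d)"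
    using assms(1) E[OF V(1,2)] E[OF V(2,3)] E[OF V(3,4)] E[OF V(1,3)] E[OF V(2,4)] E[OF V(1,4)]
    by (simp add: inj_on_eq_iff V)
  with V show False using assms(3) unfolding cograph_def by blast
qed

lemma sparse_bounded_iso:
  assumes "inj_on h V" and E: "\<And>u v. u \<in> V \<Longrightarrow> v \<in> V \<Longrightarrow> E u v = F (h u) (h v)"
    and "sparse_bounded k F (h ` V) y"
  shows "sparse_bounded k E V y"
  unfolding sparse_bounded_def
proof (intro allI impI)
  fix S assume "S \<subseteq> V" "k_sparse k E S"
  moreover have "inj_on h S" using assms(1) \<open>S \<subseteq> V\<close> by (rule inj_on_subset)
  ultimately have "k_sparse k F (h ` S)" "card (h ` S) = card S"
    using k_sparse_iso[of h S E F k] E by (auto simp: card_image)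
  with assms(3) \<open>S \<subseteq> V\<close> show "card S \<le> y" unfolding sparse_bounded_def by (metis image_mono)
qed

lemma dense_bounded_iso:
  assumes "inj_on h V" and E: "\<And>u v. u \<in> V \<Longrightarrow> v \<in> V \<Longrightarrow> E u v = F (h u) (h v)"
    and "dense_bounded k F (h ` V) x"
  shows "dense_bounded k E V x"
  using assms unfolding dense_bounded_eq_sparse_bounded_compl
  by (intro sparse_bounded_iso[where h = h]) (auto simp: compl_graph_def inj_on_eq_iff)

lemma ex_cograph_on_initial_segment:
  assumes "cograph W F" "dense_bounded k F W x" "sparse_bounded k F W y"
  obtains E where "cograph {0..<card W} E"
    "dense_bounded k E {0..<card W} x" "sparse_bounded k E {0..<card W} y"
proof -
  have "finite W" using assms(1) by (simp add: cograph_def simple_graph_def)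
  then obtain h where "bij_betw h {0..<card W} W" using ex_bij_betw_nat_finite by blast
  then have h: "inj_on h {0..<card W}" "h ` {0..<card W} = W" by (auto simp: bij_betw_def)
  let ?E = "\<lambda>u v. F (h u) (h v)"
  have "cograph {0..<card W} ?E" using h assms(1) by (intro cograph_iso[of h]) auto
  moreover have "dense_bounded k ?E {0..<card W} x"
    using h assms(2) by (intro dense_bounded_iso[of h]) auto
  moreover have "sparse_bounded k ?E {0..<card W} y"
    using h assms(3) by (intro sparse_bounded_iso[of h]) auto
  ultimately show ?thesis by (rule that)
qed

lemma ramsey_CO_eqI:
  fixes W :: "'b set"
  assumes upper: "\<And>V :: nat set. \<And>E. cograph V E \<Longrightarrow> dense_bounded k E V x \<Longrightarrow>
      sparse_bounded k E V y \<Longrightarrow> card V \<le> N"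
    and lower: "cograph W F" "card W = N" "dense_bounded k F W x" "sparse_bounded k F W y"
  shows "ramsey_CO k (Suc x) (Suc y) = N + 1"
  unfolding ramsey_CO_def
proof (rule Least_equality)
  show "\<forall>E. cograph {0..<N + 1} E \<longrightarrow>
      (\<exists>S\<subseteq>{0..<N + 1}. card S = Suc x \<and> k_dense k E S) \<or>
      (\<exists>S\<subseteq>{0..<N + 1}. card S = Suc y \<and> k_sparse k E S)"
    using upper[of "{0..<N + 1}"] by (auto simp: ex_k_dense_card_eq_iff ex_k_sparse_card_eq_iff)
next
  fix n :: nat
  assume n: "\<forall>E. cograph {0..<n} E \<longrightarrow>
      (\<exists>S\<subseteq>{0..<n}. card S = Suc x \<and> k_dense k E S) \<or>
      (\<exists>S\<subseteq>{0..<n}. card S = Suc y \<and> k_sparse k E S)"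
  show "N + 1 \<le> n"
  proof (rule ccontr)
    assume "\<not> N + 1 \<le> n"
    then have sub: "{0..<n} \<subseteq> {0..<N}" by auto
    obtain E where "cograph {0..<N} E" "dense_bounded k E {0..<N} x" "sparse_bounded k E {0..<N} y"
      using ex_cograph_on_initial_segment[OF lower(1,3,4)] lower(2) by metis
    then have "cograph {0..<n} E" "dense_bounded k E {0..<n} x" "sparse_bounded k E {0..<n} y"
      using sub by (auto intro: cograph_subset dense_bounded_subset sparse_bounded_subset)
    then show False
      using n by (auto simp: ex_k_dense_card_eq_iff ex_k_sparse_card_eq_iff)
  qed
qed

theorem theorem7p2:
  fixes k i j :: nat
  assumes "i \<ge> k + 2" and "j \<ge> k + 2"
  shows "ramsey_CO k i j =
    1 + ((i - 1) * (j - 1) - ((i - 1) mod (k + 1)) * ((j - 1) mod (k + 1))) div (k + 1)"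
proof -
  obtain x y where i: "i = Suc x" and j: "j = Suc y" and "k < x" "k < y"
    using assms by (cases i; cases j) auto
  obtain W :: "extremal_vertex set" and F where "cograph W F" "card W = co_bound (k + 1) x y"
    "dense_bounded k F W x" "sparse_bounded k F W y"
    using ex_cograph_co_bound[OF \<open>k < x\<close> \<open>k < y\<close>] by blast
  then have "ramsey_CO k (Suc x) (Suc y) = co_bound (k + 1) x y + 1"
    using cograph_card_le_co_bound[OF _ \<open>k < x\<close> \<open>k < y\<close>] by (intro ramsey_CO_eqI)
  then show ?thesis unfolding i j by (simp add: co_bound_eq)
qed

end
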